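(* Let $(\Omega,\mathcal{F},P,T)$ be an ergodic measure preserving system with $(\Omega,\mathcal{F})$ a standard measurable space. The following are equivalent: (i) there exists $B\in\mathcal{F}$ with $P(B)>0$ such that for every $C\in\mathcal{F}$ with $C\subset B$, $\lim_{n\to\infty}\frac{1}{n}\sum_{i=0}^{n-1}P^{1/2}(B\cap T^{-i}C)=P^{1/2}(B)P(C)$; (ii) $P$ is periodic, i.e. there exist $r\in\mathbb{N}$ and distinct points $\omega_1,\dots,\omega_r\in\Omega$ with $P(\{\omega_i\})=\frac{1}{r}$ for $i=1,\dots,r$. In this case (with $B$ as in (i)), $r=\frac{1}{P(B)}\in\mathbb{N}$.
   Context: A measure preserving system is a probability space $(\Omega,\mathcal{F},P)$ with measurable $T:\Omega\to\Omega$ and $P(T^{-1}A)=P(A)$ for all $A$; it is ergodic if $P(A)\in\{0,1\}$ whenever $T^{-1}A=A$. A measurable space is standard if isomorphic to a complete separable metric space with its Borel $\sigma$-algebra. $P^{1/2}(A)=(P(A))^{1/2}$. *)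

theory Defs
  imports "HOL-Probability.Probability"
begin

text \<open>A measurable space is standard if it is isomorphic to a complete separable
  metric space with its Borel sigma-algebra; transporting the metric along the
  isomorphism, equivalently the underlying set carries a complete separable metric
  whose open sets generate the sigma-algebra.\<close>
definition standard_space :: "'a measure \<Rightarrow> bool" where
  "standard_space M \<longleftrightarrow> (\<exists>d. Metric_space (space M) d \<and>
      Metric_space.mcomplete (space M) d \<and>
      separable_space (Metric_space.mtopology (space M) d) \<and>
      sets M = sigma_sets (space M) {U. openin (Metric_space.mtopology (space M) d) U})"

definition measure_preserving_system :: "'a measure \<Rightarrow> ('a \<Rightarrow> 'a) \<Rightarrow> bool" where
  "measure_preserving_system M T \<longleftrightarrow> prob_space M \<and> T \<in> measurable M M \<and>
     (\<forall>A\<in>sets M. measure M (T -` A \<inter> space M) = measure M A)"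

definition ergodic_system :: "'a measure \<Rightarrow> ('a \<Rightarrow> 'a) \<Rightarrow> bool" where
  "ergodic_system M T \<longleftrightarrow> measure_preserving_system M T \<and>
     (\<forall>A\<in>sets M. T -` A \<inter> space M = A \<longrightarrow> measure M A = 0 \<or> measure M A = 1)"

definition cond_i :: "'a measure \<Rightarrow> ('a \<Rightarrow> 'a) \<Rightarrow> 'a set \<Rightarrow> bool" where
  "cond_i M T B \<longleftrightarrow> B \<in> sets M \<and> measure M B > 0 \<and>
     (\<forall>C\<in>sets M. C \<subseteq> B \<longrightarrow>
        (\<lambda>n. (1 / real n) * (\<Sum>i<n. sqrt (measure M (B \<inter> ((T ^^ i) -` C \<inter> space M)))))
          \<longlonglongrightarrow> sqrt (measure M B) * measure M C)"

definition periodic_with :: "'a measure \<Rightarrow> nat \<Rightarrow> (nat \<Rightarrow> 'a) \<Rightarrow> bool" where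
  "periodic_with M r \<omega> \<longleftrightarrow> r \<ge> 1 \<and> inj_on \<omega> {1..r} \<and>
     (\<forall>i\<in>{1..r}. \<omega> i \<in> space M \<and> measure M {\<omega> i} = 1 / real r)"

end

theory Submission
  imports Defs "HOL-Combinatorics.Orbits"
begin

(* If B satisfies (i), the Cauchy-Schwarz inequality applied to the Cesaro means of
   sqrt P(B \<inter> T^-i C) over a finite measurable partition of B shows that some piece
   has measure at least P(B)^3. In a standard space the partitions of B generated by a
   countable separating family shrink to points, so B contains a point of mass at least
   P(B)^3. The points of maximal mass form a finite set which T maps into itself; by
   ergodicity it has full measure, so P is uniform on it.
   Conversely, if P is uniform on r points, ergodicity forces T to permute them
   cyclically, so i \<mapsto> P(B \<inter> T^-i {x}) is r-periodic and the Cesaro mean in (i)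
   for C = {x} equals sqrt(1/r) k / r, where k is the number of these points in B.
   Comparing with sqrt(P B) P{x} = sqrt(k/r) / r gives k = 1, that is P(B) = 1/r;
   and B = {x} itself satisfies (i). *)

lemma measure_preserving_system_prob_space:
  "measure_preserving_system M T \<Longrightarrow> prob_space M"
  by (simp add: measure_preserving_system_def)

lemma measure_preserving_system_measurable:
  "measure_preserving_system M T \<Longrightarrow> T \<in> M \<rightarrow>\<^sub>M M"
  by (simp add: measure_preserving_system_def)

lemma ergodic_system_measure_preserving:
  "ergodic_system M T \<Longrightarrow> measure_preserving_system M T"
  by (simp add: ergodic_system_def)

lemma vimage_funpow_sets:
  assumes "T \<in> M \<rightarrow>\<^sub>M M" and "A \<in> sets M"
  shows "(T ^^ i) -` A \<inter> space M \<in> sets M"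
  using measurable_compose_n[OF assms(1)] assms(2) by (rule measurable_sets)

lemma measure_preserving_system_measure_vimage_funpow:
  assumes mps: "measure_preserving_system M T" and A: "A \<in> sets M"
  shows "measure M ((T ^^ i) -` A \<inter> space M) = measure M A"
  using A
proof (induction i arbitrary: A)
  case 0
  then show ?case by (simp add: Int_absorb2 sets.sets_into_space)
next
  case (Suc i)
  have T: "T \<in> M \<rightarrow>\<^sub>M M" using mps by (rule measure_preserving_system_measurable)
  have vimage_Suc: "(T ^^ Suc i) -` A \<inter> space M = T -` ((T ^^ i) -` A \<inter> space M) \<inter> space M"
    unfolding funpow_Suc_right using measurable_space[OF T] by auto
  have "(T ^^ i) -` A \<inter> space M \<in> sets M"
    using T Suc.prems by (rule vimage_funpow_sets)
  then have "measure M (T -` ((T ^^ i) -` A \<inter> space M) \<inter> space M) = measure M ((T ^^ i) -` A \<inter> space M)"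
    using mps unfolding measure_preserving_system_def by blast
  then show ?case
    using Suc by (simp only: vimage_Suc)
qed

lemma sum_lessThan_periodic_zero:
  fixes g :: "nat \<Rightarrow> 'a::comm_monoid_add"
  assumes per: "\<And>i. g i = g (i mod r)" and zero: "(\<Sum>i<r. g i) = 0"
  shows "(\<Sum>i<n. g i) = (\<Sum>i<n mod r. g i)"
proof (induction n)
  case 0
  show ?case by simp
next
  case (Suc n)
  have "(\<Sum>i<Suc n. g i) = (\<Sum>i<Suc (n mod r). g i)"
    using Suc.IH per[of n] by simp
  then show ?case
    using zero by (simp add: mod_Suc del: sum.lessThan_Suc)
qed

lemma Cesaro_mean_periodic:
  fixes f :: "nat \<Rightarrow> real"
  assumes r: "0 < r" and per: "\<And>i. f i = f (i mod r)"
  shows "(\<lambda>n. 1 / real n * (\<Sum>i<n. f i)) \<longlonglongrightarrow> (\<Sum>i<r. f i) / r"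
proof -
  define c where "c = (\<Sum>i<r. f i) / r"
  define g where "g i = f i - c" for i
  have "(\<Sum>i<r. g i) = 0"
    using r by (simp add: g_def c_def sum_subtractf)
  moreover have "g i = g (i mod r)" for i
    using per[of i] by (simp add: g_def)
  ultimately have g_sum: "(\<Sum>i<n. g i) = (\<Sum>i<n mod r. g i)" for n
    by (rule sum_lessThan_periodic_zero[rotated])
  define K where "K = (\<Sum>i<r. \<bar>g i\<bar>)"
  have g_bounded: "\<bar>\<Sum>i<n. g i\<bar> \<le> K" for n
  proof -
    have "\<bar>\<Sum>i<n. g i\<bar> \<le> (\<Sum>i<n mod r. \<bar>g i\<bar>)"
      unfolding g_sum[of n] by (rule sum_abs)
    also have "\<dots> \<le> K"
      unfolding K_def using r by (intro sum_mono2) auto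
    finally show ?thesis .
  qed
  have "(\<lambda>n. 1 / real n * (\<Sum>i<n. g i)) \<longlonglongrightarrow> 0"
  proof (rule Lim_null_comparison)
    show "\<forall>\<^sub>F n in sequentially. norm (1 / real n * (\<Sum>i<n. g i)) \<le> K / real n"
      using g_bounded by (simp add: abs_mult divide_right_mono)
  qed (rule lim_const_over_n)
  then have "(\<lambda>n. 1 / real n * (\<Sum>i<n. g i) + c) \<longlonglongrightarrow> c"
    using tendsto_add[OF _ tendsto_const] by fastforce
  moreover have "\<forall>\<^sub>F n in sequentially. 1 / real n * (\<Sum>i<n. g i) + c = 1 / real n * (\<Sum>i<n. f i)"
    using eventually_gt_at_top[of 0]
    by eventually_elim (simp add: g_def sum_subtractf field_simps)
  ultimately show ?thesis
    unfolding c_def by (rule Lim_transform_eventually)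
qed

lemma Cesaro_sqrt_sum_le:
  fixes a :: "nat \<Rightarrow> 'b \<Rightarrow> real"
  assumes fin: "finite CC" and nonneg: "\<And>i C. C \<in> CC \<Longrightarrow> 0 \<le> a i C"
    and bound: "\<And>i C. C \<in> CC \<Longrightarrow> a i C \<le> m"
  shows "(1 / real n * (\<Sum>i<n. sqrt (\<Sum>C\<in>CC. a i C)))\<^sup>2
           \<le> sqrt m * (\<Sum>C\<in>CC. 1 / real n * (\<Sum>i<n. sqrt (a i C)))"
proof (cases "n = 0")
  case True
  then show ?thesis by simp
next
  case False
  have "(\<Sum>i<n. sqrt (\<Sum>C\<in>CC. a i C))\<^sup>2 \<le> (\<Sum>i<n. (\<Sum>C\<in>CC. a i C)) * n"
    using sum_squared_le_sum_of_squares[of "\<lambda>i. sqrt (\<Sum>C\<in>CC. a i C)" "{..<n}"]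
    by (simp add: nonneg sum_nonneg)
  also have "\<dots> \<le> (\<Sum>i<n. \<Sum>C\<in>CC. sqrt m * sqrt (a i C)) * n"
  proof (intro mult_right_mono sum_mono)
    fix i C
    assume "C \<in> CC"
    then have "sqrt (a i C) * sqrt (a i C) \<le> sqrt m * sqrt (a i C)"
      by (intro mult_right_mono) (simp_all add: bound nonneg)
    then show "a i C \<le> sqrt m * sqrt (a i C)"
      using nonneg[OF \<open>C \<in> CC\<close>] by simp
  qed simp
  also have "\<dots> = sqrt m * (\<Sum>C\<in>CC. 1 / real n * (\<Sum>i<n. sqrt (a i C))) * (real n)\<^sup>2"
    using False
    by (simp add: sum_distrib_left sum.swap[of _ CC] power2_eq_square sum_divide_distrib[symmetric])
  finally show ?thesis
    using False by (simp add: power_divide field_simps)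
qed

lemma (in Metric_space) dense_mball_separates:
  assumes dense: "mtopology closure_of D = M" and x: "x \<in> M" and y: "y \<in> M" and "x \<noteq> y"
  obtains q n where "q \<in> D" "x \<in> mball q (inverse (Suc n))" "y \<notin> mball q (inverse (Suc n))"
proof -
  have "0 < d x y"
    using x y \<open>x \<noteq> y\<close> by simp
  then obtain n where n: "inverse (Suc n) < d x y / 2"
    using reals_Archimedean[of "d x y / 2"] by auto
  have "\<forall>r>0. \<exists>q\<in>D. q \<in> mball x r"
    using x dense unfolding metric_closure_of by blast
  then obtain q where q: "q \<in> D" "q \<in> mball x (inverse (Suc n))"
    by (meson inverse_Suc)
  then have "q \<in> M" "d q x < inverse (Suc n)"
    by (auto simp: commute)
  then have "x \<in> mball q (inverse (Suc n))"
    using x by simp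
  moreover have "y \<notin> mball q (inverse (Suc n))"
  proof
    assume "y \<in> mball q (inverse (Suc n))"
    then have "d q y < inverse (Suc n)"
      by simp
    moreover have "d x y \<le> d x q + d q y"
      using x \<open>q \<in> M\<close> y by (rule triangle)
    ultimately show False
      using n \<open>d q x < inverse (Suc n)\<close> commute[of q x] by linarith
  qed
  ultimately show ?thesis
    using that q(1) by blast
qed

lemma standard_space_separating_sequence:
  assumes "standard_space M"
  obtains U :: "nat \<Rightarrow> 'a set" where "\<And>k. U k \<in> sets M"
    and "\<And>x y. x \<in> space M \<Longrightarrow> y \<in> space M \<Longrightarrow> x \<noteq> y \<Longrightarrow> \<exists>k. x \<in> U k \<and> y \<notin> U k"
proof -
  obtain d where "Metric_space (space M) d"
    and separable: "separable_space (Metric_space.mtopology (space M) d)"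
    and sets_eq: "sets M = sigma_sets (space M) {U. openin (Metric_space.mtopology (space M) d) U}"
    using assms unfolding standard_space_def by blast
  interpret Metric_space "space M" d by fact
  obtain D where "countable D" and dense: "mtopology closure_of D = space M"
    using separable unfolding separable_space_def by auto
  define \<U> where "\<U> = insert {} ((\<lambda>(q, n). mball q (inverse (Suc n))) ` (D \<times> UNIV))"
  have "countable \<U>" "\<U> \<noteq> {}"
    using \<open>countable D\<close> by (auto simp: \<U>_def)
  then have range_U: "range (from_nat_into \<U>) = \<U>"
    by (simp add: range_from_nat_into)
  have "V \<in> sets M" if "V \<in> \<U>" for V
  proof (cases "V = {}")
    case False
    then have "openin mtopology V"
      using that by (auto simp: \<U>_def)
    then show ?thesis
      unfolding sets_eq by (intro sigma_sets.Basic) simp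
  qed simp
  then have "from_nat_into \<U> k \<in> sets M" for k
    using range_U by blast
  moreover have "\<exists>k. x \<in> from_nat_into \<U> k \<and> y \<notin> from_nat_into \<U> k"
    if xy: "x \<in> space M" "y \<in> space M" "x \<noteq> y" for x y
  proof -
    obtain q n where "q \<in> D" "x \<in> mball q (inverse (Suc n))" "y \<notin> mball q (inverse (Suc n))"
      using dense_mball_separates[OF dense xy] .
    moreover have "mball q (inverse (Suc n)) \<in> \<U>"
      using \<open>q \<in> D\<close> by (auto simp: \<U>_def)
    then have "mball q (inverse (Suc n)) \<in> range (from_nat_into \<U>)"
      by (simp add: range_U)
    ultimately show ?thesis
      by (metis rangeE)
  qed
  ultimately show ?thesis
    using that by blast
qed

definition cell :: "'a set \<Rightarrow> (nat \<Rightarrow> 'a set) \<Rightarrow> nat \<Rightarrow> 'a \<Rightarrow> 'a set" where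
  "cell S U n x = {y \<in> S. \<forall>k<n. y \<in> U k \<longleftrightarrow> x \<in> U k}"

lemma cell_self: "x \<in> S \<Longrightarrow> x \<in> cell S U n x"
  by (simp add: cell_def)

lemma cell_eq: "y \<in> cell S U n x \<Longrightarrow> cell S U n y = cell S U n x"
  by (auto simp: cell_def)

lemma cell_antimono: "n \<le> m \<Longrightarrow> cell S U m x \<subseteq> cell S U n x"
  by (auto simp: cell_def)

lemma finite_image_cell: "finite (cell S U n ` A)"
proof (rule finite_subset)
  let ?cell_of = "\<lambda>K. {y \<in> S. \<forall>k<n. y \<in> U k \<longleftrightarrow> k \<in> K}"
  show "cell S U n ` A \<subseteq> ?cell_of ` Pow {..<n}"
  proof (rule image_subsetI)
    fix x
    have "cell S U n x = ?cell_of {k. k < n \<and> x \<in> U k}"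
      by (auto simp: cell_def)
    moreover have "{k. k < n \<and> x \<in> U k} \<in> Pow {..<n}"
      by auto
    ultimately show "cell S U n x \<in> ?cell_of ` Pow {..<n}"
      by (rule image_eqI)
  qed
qed simp

lemma Inter_cell:
  assumes "x \<in> S" and sep: "\<And>y. y \<in> S \<Longrightarrow> y \<noteq> x \<Longrightarrow> \<exists>k. x \<in> U k \<and> y \<notin> U k"
  shows "(\<Inter>n. cell S U n x) = {x}"
proof
  show "{x} \<subseteq> (\<Inter>n. cell S U n x)"
    using assms(1) cell_self by fast
  show "(\<Inter>n. cell S U n x) \<subseteq> {x}"
  proof
    fix y
    assume y: "y \<in> (\<Inter>n. cell S U n x)"
    then have "y \<in> S"
      by (auto simp: cell_def)
    show "y \<in> {x}"
    proof (rule ccontr)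
      assume "y \<notin> {x}"
      then obtain k where "x \<in> U k" "y \<notin> U k"
        using sep \<open>y \<in> S\<close> by blast
      moreover have "y \<in> cell S U (Suc k) x"
        using y by blast
      ultimately show False
        by (simp add: cell_def)
    qed
  qed
qed

lemma cell_disjoint: "cell S U n x = cell S U n x' \<or> cell S U n x \<inter> cell S U n x' = {}"
proof (cases "cell S U n x \<inter> cell S U n x' = {}")
  case False
  then obtain y where "y \<in> cell S U n x" "y \<in> cell S U n x'"
    by blast
  then show ?thesis
    by (metis cell_eq)
qed simp

lemma cell_Suc: "cell S U (Suc n) x = cell S U n x \<inter> (if x \<in> U n then U n else S - U n)"
  by (auto simp: cell_def less_Suc_eq)

lemma cell_in_sets:
  assumes "\<And>k. U k \<in> sets M"
  shows "cell (space M) U n x \<in> sets M"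
proof (induction n)
  case 0
  show ?case
    by (simp add: cell_def)
next
  case (Suc n)
  then show ?case
    using assms by (auto simp: cell_Suc)
qed

lemma singleton_in_sets_separating:
  fixes U :: "nat \<Rightarrow> 'a set"
  assumes U: "\<And>k. U k \<in> sets M"
    and sep: "\<And>x y. x \<in> space M \<Longrightarrow> y \<in> space M \<Longrightarrow> x \<noteq> y \<Longrightarrow> \<exists>k. x \<in> U k \<and> y \<notin> U k"
    and x: "x \<in> space M"
  shows "{x} \<in> sets M"
proof -
  have "(\<Inter>n. cell (space M) U n x) = {x}"
    using x sep by (intro Inter_cell) auto
  moreover have "(\<Inter>n. cell (space M) U n x) \<in> sets M"
    using cell_in_sets[OF U] by (intro sets.countable_INT) auto
  ultimately show ?thesis
    by simp
qed

lemma cell_partition: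
  assumes "B \<subseteq> S"
  shows "finite ((\<lambda>x. B \<inter> cell S U n x) ` B)"
    and "disjoint ((\<lambda>x. B \<inter> cell S U n x) ` B)"
    and "\<Union> ((\<lambda>x. B \<inter> cell S U n x) ` B) = B"
proof -
  show "finite ((\<lambda>x. B \<inter> cell S U n x) ` B)"
    using finite_imageI[OF finite_image_cell, of "\<lambda>c. B \<inter> c" S U n B] by (simp add: image_image)
  show "disjoint ((\<lambda>x. B \<inter> cell S U n x) ` B)"
  proof (rule disjointI)
    fix C C'
    assume "C \<in> (\<lambda>x. B \<inter> cell S U n x) ` B" "C' \<in> (\<lambda>x. B \<inter> cell S U n x) ` B" "C \<noteq> C'"
    then obtain x x' where "C = B \<inter> cell S U n x" "C' = B \<inter> cell S U n x'"
      "cell S U n x \<noteq> cell S U n x'"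
      by blast
    then show "C \<inter> C' = {}"
      using cell_disjoint[of S U n x x'] by blast
  qed
  show "\<Union> ((\<lambda>x. B \<inter> cell S U n x) ` B) = B"
    using assms by (auto intro: cell_self)
qed

lemma Collect_cell_eq_Union:
  assumes "B \<subseteq> S"
  shows "{x \<in> B. P (B \<inter> cell S U n x)} = \<Union> {C \<in> (\<lambda>x. B \<inter> cell S U n x) ` B. P C}"
proof
  show "{x \<in> B. P (B \<inter> cell S U n x)} \<subseteq> \<Union> {C \<in> (\<lambda>x. B \<inter> cell S U n x) ` B. P C}"
  proof
    fix y
    assume y: "y \<in> {x \<in> B. P (B \<inter> cell S U n x)}"
    then have "y \<in> B \<inter> cell S U n y"
      using assms by (auto intro: cell_self)
    moreover have "B \<inter> cell S U n y \<in> {C \<in> (\<lambda>x. B \<inter> cell S U n x) ` B. P C}"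
      using y by (simp add: imageI)
    ultimately show "y \<in> \<Union> {C \<in> (\<lambda>x. B \<inter> cell S U n x) ` B. P C}"
      by blast
  qed
  show "\<Union> {C \<in> (\<lambda>x. B \<inter> cell S U n x) ` B. P C} \<subseteq> {x \<in> B. P (B \<inter> cell S U n x)}"
  proof
    fix y
    assume "y \<in> \<Union> {C \<in> (\<lambda>x. B \<inter> cell S U n x) ` B. P C}"
    then obtain x where "y \<in> B" "y \<in> cell S U n x" "P (B \<inter> cell S U n x)"
      by blast
    then show "y \<in> {x \<in> B. P (B \<inter> cell S U n x)}"
      using cell_eq[of y S U n x] by simp
  qed
qed

lemma measure_preserving_system_measure_Int_vimage_le:
  assumes mps: "measure_preserving_system M T" and "B \<in> sets M" and "C \<in> sets M"
  shows "measure M (B \<inter> ((T ^^ i) -` C \<inter> space M)) \<le> measure M C"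
proof -
  interpret prob_space M
    using mps by (rule measure_preserving_system_prob_space)
  have "(T ^^ i) -` C \<inter> space M \<in> sets M"
    using measure_preserving_system_measurable[OF mps] \<open>C \<in> sets M\<close> by (rule vimage_funpow_sets)
  then have "measure M (B \<inter> ((T ^^ i) -` C \<inter> space M)) \<le> measure M ((T ^^ i) -` C \<inter> space M)"
    by (intro finite_measure_mono) auto
  also have "\<dots> = measure M C"
    using mps \<open>C \<in> sets M\<close> by (rule measure_preserving_system_measure_vimage_funpow)
  finally show ?thesis .
qed

lemma (in finite_measure) measure_Int_vimage_Union:
  assumes T: "T \<in> M \<rightarrow>\<^sub>M M" and B: "B \<in> sets M"
    and fin: "finite CC" and disj: "disjoint CC" and CC_sets: "CC \<subseteq> sets M"
  shows "measure M (B \<inter> ((T ^^ i) -` \<Union>CC \<inter> space M))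
           = (\<Sum>C\<in>CC. measure M (B \<inter> ((T ^^ i) -` C \<inter> space M)))"
proof -
  have "B \<inter> ((T ^^ i) -` \<Union>CC \<inter> space M) = (\<Union>C\<in>CC. B \<inter> ((T ^^ i) -` C \<inter> space M))"
    by auto
  also have "measure M \<dots> = (\<Sum>C\<in>CC. measure M (B \<inter> ((T ^^ i) -` C \<inter> space M)))"
  proof (rule finite_measure_finite_Union[OF fin])
    show "(\<lambda>C. B \<inter> ((T ^^ i) -` C \<inter> space M)) ` CC \<subseteq> sets M"
      using CC_sets B vimage_funpow_sets[OF T] by auto
    show "disjoint_family_on (\<lambda>C. B \<inter> ((T ^^ i) -` C \<inter> space M)) CC"
      using disj unfolding disjoint_family_on_def disjoint_def by blast
  qed
  finally show ?thesis .
qed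

lemma cube_le_of_sqrt_bound:
  fixes p m :: real
  assumes "0 < p" and "0 \<le> m" and "(sqrt p * p)\<^sup>2 \<le> sqrt m * (sqrt p * p)"
  shows "p ^ 3 \<le> m"
proof -
  have "sqrt p * p \<le> sqrt m"
    using assms(1,3) by (simp add: power2_eq_square)
  then have "(sqrt p * p)\<^sup>2 \<le> m"
    using assms(1,2) by (metis mult_nonneg_nonneg power_mono real_sqrt_ge_zero real_sqrt_pow2 less_imp_le)
  moreover have "(sqrt p * p)\<^sup>2 = p ^ 3"
    using assms(1) by (simp add: power_mult_distrib power2_eq_square power3_eq_cube)
  ultimately show ?thesis
    by simp
qed

lemma cond_i_partition_has_large_piece:
  assumes mps: "measure_preserving_system M T" and B: "cond_i M T B"
    and fin: "finite CC" and disj: "disjoint CC" and CC_sets: "CC \<subseteq> sets M" and CC_B: "\<Union>CC = B"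
  shows "\<exists>C\<in>CC. measure M B ^ 3 \<le> measure M C"
proof -
  interpret prob_space M
    using mps by (rule measure_preserving_system_prob_space)
  have B_sets: "B \<in> sets M" and B_pos: "0 < measure M B"
    using B by (auto simp: cond_i_def)
  define a where "a i C = measure M (B \<inter> ((T ^^ i) -` C \<inter> space M))" for i C
  define m where "m = Max (measure M ` CC)"
  define L where "L = sqrt (measure M B) * measure M B"
  have "CC \<noteq> {}"
    using CC_B B_pos by auto
  then have m_in: "m \<in> measure M ` CC"
    unfolding m_def using fin by (intro Max_in) auto
  have a_le: "a i C \<le> m" if "C \<in> CC" for i C
  proof -
    have "a i C \<le> measure M C"
      unfolding a_def using that CC_sets by (intro measure_preserving_system_measure_Int_vimage_le[OF mps B_sets]) auto
    also have "\<dots> \<le> m"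
      unfolding m_def using fin that by (intro Max_ge) auto
    finally show ?thesis .
  qed
  have "(\<lambda>n. 1 / real n * (\<Sum>i<n. sqrt (a i B))) \<longlonglongrightarrow> L"
    using B B_sets unfolding cond_i_def a_def L_def by blast
  moreover have "a i B = (\<Sum>C\<in>CC. a i C)" for i
    using measure_Int_vimage_Union[OF measure_preserving_system_measurable[OF mps] B_sets fin disj CC_sets]
    unfolding a_def CC_B .
  ultimately have lim_B: "(\<lambda>n. 1 / real n * (\<Sum>i<n. sqrt (\<Sum>C\<in>CC. a i C))) \<longlonglongrightarrow> L"
    by simp
  have "measure M (\<Union>C\<in>CC. C) = (\<Sum>C\<in>CC. measure M C)"
    by (rule finite_measure_finite_Union)
      (use fin CC_sets disj in \<open>auto simp: disjoint_family_on_def disjoint_def\<close>)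
  then have "L = (\<Sum>C\<in>CC. sqrt (measure M B) * measure M C)"
    using CC_B by (simp add: L_def sum_distrib_left)
  moreover have "(\<lambda>n. \<Sum>C\<in>CC. 1 / real n * (\<Sum>i<n. sqrt (a i C)))
                   \<longlonglongrightarrow> (\<Sum>C\<in>CC. sqrt (measure M B) * measure M C)"
  proof (rule tendsto_sum)
    fix C
    assume "C \<in> CC"
    then have "C \<in> sets M" "C \<subseteq> B"
      using CC_sets CC_B by auto
    then show "(\<lambda>n. 1 / real n * (\<Sum>i<n. sqrt (a i C))) \<longlonglongrightarrow> sqrt (measure M B) * measure M C"
      using B unfolding cond_i_def a_def by blast
  qed
  ultimately have lim_CC: "(\<lambda>n. \<Sum>C\<in>CC. 1 / real n * (\<Sum>i<n. sqrt (a i C))) \<longlonglongrightarrow> L"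
    by simp
  \<comment> \<open>Cauchy-Schwarz, then the limit: the mean over B squared is at most sqrt m times
      the sum of the means over the pieces.\<close>
  have "L\<^sup>2 \<le> sqrt m * L"
    using Cesaro_sqrt_sum_le[OF fin _ a_le]
    by (intro LIMSEQ_le[OF tendsto_power[OF lim_B] tendsto_mult[OF tendsto_const lim_CC]])
      (simp add: a_def)
  then have "measure M B ^ 3 \<le> m"
    using B_pos m_in unfolding L_def by (intro cube_le_of_sqrt_bound) auto
  then show ?thesis
    using m_in by auto
qed

lemma (in finite_measure) measure_Inter_decseq_ge:
  assumes "range F \<subseteq> sets M" and "decseq F" and "\<And>n. \<delta> \<le> measure M (F n)"
  shows "\<delta> \<le> measure M (\<Inter>n. F n)"
  using finite_Lim_measure_decseq[OF assms(1,2)] assms(3) by (intro LIMSEQ_le_const) auto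

lemma (in finite_measure) heavy_cells:
  fixes n :: nat
  assumes U: "\<And>k. U k \<in> sets M" and B: "B \<in> sets M"
    and large: "\<And>CC. finite CC \<Longrightarrow> disjoint CC \<Longrightarrow> CC \<subseteq> sets M \<Longrightarrow> \<Union>CC = B \<Longrightarrow>
                  \<exists>C\<in>CC. \<delta> \<le> measure M C"
  defines "F \<equiv> {x \<in> B. \<delta> \<le> measure M (B \<inter> cell (space M) U n x)}"
  shows "F \<in> sets M" and "\<delta> \<le> measure M F"
proof -
  have B_space: "B \<subseteq> space M"
    using B by (rule sets.sets_into_space)
  let ?pieces = "(\<lambda>x. B \<inter> cell (space M) U n x) ` B"
  have pieces_sets: "?pieces \<subseteq> sets M"
    by (rule image_subsetI) (rule sets.Int[OF B cell_in_sets[OF U]])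
  have F_Union: "F = \<Union> {C \<in> ?pieces. \<delta> \<le> measure M C}"
    unfolding F_def by (rule Collect_cell_eq_Union[OF B_space])
  have "finite {C \<in> ?pieces. \<delta> \<le> measure M C}"
    using cell_partition(1)[OF B_space] by simp
  moreover have "{C \<in> ?pieces. \<delta> \<le> measure M C} \<subseteq> sets M"
    using pieces_sets by blast
  ultimately show "F \<in> sets M"
    unfolding F_Union by (rule sets.finite_Union)
  obtain C where C: "C \<in> ?pieces" "\<delta> \<le> measure M C"
    using large[OF cell_partition(1,2)[OF B_space] pieces_sets cell_partition(3)[OF B_space]] by blast
  then have "C \<subseteq> F"
    unfolding F_Union by blast
  then have "measure M C \<le> measure M F"
    using \<open>F \<in> sets M\<close> by (rule finite_measure_mono)
  with C(2) show "\<delta> \<le> measure M F"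
    by simp
qed

lemma (in finite_measure) separating_sequence_point_mass:
  fixes U :: "nat \<Rightarrow> 'a set"
  assumes U: "\<And>k. U k \<in> sets M"
    and sep: "\<And>x y. x \<in> space M \<Longrightarrow> y \<in> space M \<Longrightarrow> x \<noteq> y \<Longrightarrow> \<exists>k. x \<in> U k \<and> y \<notin> U k"
    and B: "B \<in> sets M" and "0 < \<delta>"
    and large: "\<And>CC. finite CC \<Longrightarrow> disjoint CC \<Longrightarrow> CC \<subseteq> sets M \<Longrightarrow> \<Union>CC = B \<Longrightarrow>
                  \<exists>C\<in>CC. \<delta> \<le> measure M C"
  shows "\<exists>x\<in>B. \<delta> \<le> measure M {x}"
proof -
  let ?piece = "\<lambda>n x. B \<inter> cell (space M) U n x"
  have piece_sets: "?piece n x \<in> sets M" for n x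
    by (rule sets.Int[OF B cell_in_sets[OF U]])
  have piece_Suc: "?piece (Suc n) x \<subseteq> ?piece n x" for n x
    using cell_antimono[of n "Suc n" "space M" U x] by auto
  define F where "F n = {x \<in> B. \<delta> \<le> measure M (?piece n x)}" for n
  have F_sets: "F n \<in> sets M" for n
    unfolding F_def by (rule heavy_cells(1)[OF U B large])
  have F_large: "\<delta> \<le> measure M (F n)" for n
    unfolding F_def by (rule heavy_cells(2)[OF U B large])
  have "decseq F"
  proof (rule decseq_SucI)
    fix n
    have piece_mono: "measure M (?piece (Suc n) x) \<le> measure M (?piece n x)" for x
      using piece_Suc piece_sets by (rule finite_measure_mono)
    show "F (Suc n) \<subseteq> F n"
    proof
      fix x
      assume "x \<in> F (Suc n)"
      then show "x \<in> F n"
        using piece_mono[of x] by (simp add: F_def)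
    qed
  qed
  have "\<delta> \<le> measure M (\<Inter>n. F n)"
    by (rule measure_Inter_decseq_ge[OF _ \<open>decseq F\<close> F_large]) (use F_sets in blast)
  then have "(\<Inter>n. F n) \<noteq> {}"
    using \<open>0 < \<delta>\<close> by force
  then obtain x where x: "\<And>n. x \<in> F n"
    by blast
  then have "x \<in> B"
    by (simp add: F_def)
  have "decseq (\<lambda>n. ?piece n x)"
    using piece_Suc by (rule decseq_SucI)
  moreover have "\<delta> \<le> measure M (?piece n x)" for n
    using x[of n] by (simp add: F_def)
  ultimately have "\<delta> \<le> measure M (\<Inter>n. ?piece n x)"
    by (intro measure_Inter_decseq_ge) (use piece_sets in blast)+
  moreover have "(\<Inter>n. ?piece n x) = {x}"
    using Inter_cell[of x "space M" U] sep \<open>x \<in> B\<close> sets.sets_into_space[OF B] by auto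
  ultimately show ?thesis
    using \<open>x \<in> B\<close> by auto
qed

lemma vimage_Union_funpow_invariant:
  assumes TZ: "\<And>z. z \<in> Z \<Longrightarrow> T z \<in> Z" and T: "\<And>x. x \<in> S \<Longrightarrow> T x \<in> S"
  shows "T -` (\<Union>n. (T ^^ n) -` Z \<inter> S) \<inter> S = (\<Union>n. (T ^^ n) -` Z \<inter> S)"
proof (intro equalityI subsetI)
  fix x
  assume "x \<in> T -` (\<Union>n. (T ^^ n) -` Z \<inter> S) \<inter> S"
  then obtain n where "(T ^^ Suc n) x \<in> Z" "x \<in> S"
    by (auto simp: funpow_swap1)
  then show "x \<in> (\<Union>n. (T ^^ n) -` Z \<inter> S)"
    by blast
next
  fix x
  assume "x \<in> (\<Union>n. (T ^^ n) -` Z \<inter> S)"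
  then obtain n where "(T ^^ n) x \<in> Z" "x \<in> S"
    by blast
  then have "(T ^^ n) (T x) \<in> Z" "T x \<in> S"
    using TZ[of "(T ^^ n) x"] T[of x] by (simp_all add: funpow_swap1)
  then show "x \<in> T -` (\<Union>n. (T ^^ n) -` Z \<inter> S) \<inter> S"
    using \<open>x \<in> S\<close> by blast
qed

lemma ergodic_system_forward_invariant_measure:
  assumes erg: "ergodic_system M T" and Z: "Z \<in> sets M"
    and TZ: "\<And>z. z \<in> Z \<Longrightarrow> T z \<in> Z" and pos: "0 < measure M Z"
  shows "measure M Z = 1"
proof -
  have mps: "measure_preserving_system M T"
    using erg by (rule ergodic_system_measure_preserving)
  interpret prob_space M
    using mps by (rule measure_preserving_system_prob_space)
  have T: "T \<in> M \<rightarrow>\<^sub>M M"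
    using mps by (rule measure_preserving_system_measurable)
  define E where "E n = (T ^^ n) -` Z \<inter> space M" for n
  have E_sets: "range E \<subseteq> sets M"
    unfolding E_def using vimage_funpow_sets[OF T Z] by blast
  have "E n \<subseteq> E (Suc n)" for n
    using TZ by (auto simp: E_def)
  then have "(\<lambda>n. measure M (E n)) \<longlonglongrightarrow> measure M (\<Union>n. E n)"
    using E_sets by (intro finite_Lim_measure_incseq incseq_SucI)
  moreover have "measure M (E n) = measure M Z" for n
    unfolding E_def using mps Z by (rule measure_preserving_system_measure_vimage_funpow)
  ultimately have "measure M (\<Union>n. E n) = measure M Z"
    by (simp add: LIMSEQ_const_iff)
  moreover have "T -` (\<Union>n. E n) \<inter> space M = (\<Union>n. E n)"
    unfolding E_def using TZ measurable_space[OF T] by (rule vimage_Union_funpow_invariant)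
  moreover have "(\<Union>n. E n) \<in> sets M"
    using E_sets by blast
  ultimately show ?thesis
    using erg pos unfolding ergodic_system_def by (metis less_irrefl)
qed

lemma measure_pos_singleton_sets: "0 < measure M {x} \<Longrightarrow> {x} \<in> sets M"
  using measure_notin_sets by fastforce

lemma (in prob_space) finite_points_measure_ge:
  assumes "0 < p"
  shows "finite {x. p \<le> measure M {x}}"
proof -
  have "card G \<le> nat \<lfloor>1 / p\<rfloor>" if G: "G \<subseteq> {x. p \<le> measure M {x}}" "finite G" for G
  proof -
    have G_sets: "{x} \<in> sets M" if "x \<in> G" for x
      using G that \<open>0 < p\<close> by (intro measure_pos_singleton_sets) auto
    have "real (card G) * p = (\<Sum>x\<in>G. p)"
      by simp
    also have "\<dots> \<le> (\<Sum>x\<in>G. measure M {x})"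
      using G by (intro sum_mono) auto
    also have "\<dots> = measure M G"
      using G(2) G_sets by (rule finite_measure_eq_sum_singleton[symmetric])
    also have "\<dots> \<le> 1"
      by (rule prob_le_1)
    finally have "real (card G) \<le> 1 / p"
      using \<open>0 < p\<close> by (simp add: field_simps)
    then show ?thesis
      by (simp add: le_nat_floor)
  qed
  then show ?thesis
    using finite_if_finite_subsets_card_bdd by blast
qed

lemma (in prob_space) max_point_mass:
  assumes "0 < measure M {x0}"
  obtains c where "0 < c" and "\<And>x. measure M {x} \<le> c"
    and "finite {x. measure M {x} = c}" and "{x. measure M {x} = c} \<noteq> {}"
proof -
  define H where "H = {x. measure M {x0} \<le> measure M {x}}"
  have "finite H" "x0 \<in> H"
    unfolding H_def using assms by (simp_all add: finite_points_measure_ge)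
  define c where "c = Max ((\<lambda>x. measure M {x}) ` H)"
  have c_max: "measure M {x} \<le> c" if "x \<in> H" for x
    unfolding c_def using \<open>finite H\<close> that by (intro Max_ge) auto
  have "measure M {x} \<le> c" for x
  proof (cases "x \<in> H")
    case False
    then have "measure M {x} < measure M {x0}"
      by (simp add: H_def)
    then show ?thesis
      using c_max[OF \<open>x0 \<in> H\<close>] by linarith
  qed (rule c_max)
  moreover have "c \<in> (\<lambda>x. measure M {x}) ` H"
    unfolding c_def using \<open>finite H\<close> \<open>x0 \<in> H\<close> by (intro Max_in) auto
  moreover have "0 < c"
    using c_max[OF \<open>x0 \<in> H\<close>] assms by simp
  moreover have "{x. measure M {x} = c} \<subseteq> H"
    using c_max[OF \<open>x0 \<in> H\<close>] by (auto simp: H_def)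
  then have "finite {x. measure M {x} = c}"
    using \<open>finite H\<close> by (rule finite_subset)
  ultimately show ?thesis
    using that by blast
qed

lemma measure_preserving_system_measure_singleton_le:
  assumes mps: "measure_preserving_system M T" and x: "x \<in> space M" and Tx: "{T x} \<in> sets M"
  shows "measure M {x} \<le> measure M {T x}"
proof -
  interpret prob_space M
    using mps by (rule measure_preserving_system_prob_space)
  have T: "T \<in> M \<rightarrow>\<^sub>M M"
    using mps by (rule measure_preserving_system_measurable)
  have "measure M {x} \<le> measure M (T -` {T x} \<inter> space M)"
    using x measurable_sets[OF T Tx] by (intro finite_measure_mono) auto
  also have "\<dots> = measure M {T x}"
    using mps Tx unfolding measure_preserving_system_def by blast
  finally show ?thesis .
qed

lemma periodic_with_uniform_finite_set:
  assumes "finite Z" "Z \<noteq> {}" "Z \<subseteq> space M" "\<And>z. z \<in> Z \<Longrightarrow> measure M {z} = 1 / card Z"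
  shows "\<exists>\<omega>. periodic_with M (card Z) \<omega>"
proof -
  obtain \<omega> where "bij_betw \<omega> {1..card Z} Z"
    using ex_bij_betw_nat_finite_1[OF \<open>finite Z\<close>] by blast
  then have "periodic_with M (card Z) \<omega>"
    using assms by (auto simp: periodic_with_def bij_betw_def Suc_le_eq card_gt_0_iff)
  then show ?thesis
    by blast
qed

lemma ergodic_system_point_mass_imp_periodic:
  assumes erg: "ergodic_system M T" and sing: "\<And>x. x \<in> space M \<Longrightarrow> {x} \<in> sets M"
    and x0: "0 < measure M {x0}"
  shows "\<exists>r \<omega>. periodic_with M r \<omega>"
proof -
  have mps: "measure_preserving_system M T"
    using erg by (rule ergodic_system_measure_preserving)
  interpret prob_space M
    using mps by (rule measure_preserving_system_prob_space)
  obtain c where "0 < c" and c_max: "\<And>x. measure M {x} \<le> c"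
    and "finite {x. measure M {x} = c}" and "{x. measure M {x} = c} \<noteq> {}"
    using max_point_mass[OF x0] by blast
  define Z where "Z = {x. measure M {x} = c}"
  have Z_singleton_sets: "{z} \<in> sets M" if "z \<in> Z" for z
    using that \<open>0 < c\<close> by (intro measure_pos_singleton_sets) (simp add: Z_def)
  then have "Z \<subseteq> space M"
    using sets.sets_into_space by blast
  have "finite Z" and "Z \<noteq> {}"
    unfolding Z_def by fact+
  have "Z \<in> sets M"
    by (rule sets.countable[OF Z_singleton_sets countable_finite[OF \<open>finite Z\<close>]])
  have TZ: "T z \<in> Z" if "z \<in> Z" for z
  proof -
    have "z \<in> space M"
      using that \<open>Z \<subseteq> space M\<close> by blast
    then have "T z \<in> space M"
      using measure_preserving_system_measurable[OF mps] by (rule measurable_space[rotated])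
    then have "measure M {z} \<le> measure M {T z}"
      by (rule measure_preserving_system_measure_singleton_le[OF mps \<open>z \<in> space M\<close> sing])
    then show ?thesis
      using that c_max[of "T z"] by (simp add: Z_def)
  qed
  have "measure M Z = (\<Sum>z\<in>Z. measure M {z})"
    using \<open>finite Z\<close> Z_singleton_sets by (rule finite_measure_eq_sum_singleton)
  also have "\<dots> = card Z * c"
    by (simp add: Z_def)
  finally have measure_Z: "measure M Z = card Z * c" .
  have "0 < card Z"
    using \<open>finite Z\<close> \<open>Z \<noteq> {}\<close> by (simp add: card_gt_0_iff)
  then have "0 < measure M Z"
    using \<open>0 < c\<close> unfolding measure_Z by simp
  then have "measure M Z = 1"
    using ergodic_system_forward_invariant_measure[OF erg \<open>Z \<in> sets M\<close> TZ] by blast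
  then have "measure M {z} = 1 / card Z" if "z \<in> Z" for z
    using measure_Z that \<open>0 < card Z\<close> by (simp add: Z_def eq_divide_eq mult.commute)
  then have "\<exists>\<omega>. periodic_with M (card Z) \<omega>"
    by (rule periodic_with_uniform_finite_set[OF \<open>finite Z\<close> \<open>Z \<noteq> {}\<close> \<open>Z \<subseteq> space M\<close>])
  then show ?thesis
    by blast
qed

locale periodic_ergodic_system =
  fixes M :: "'a measure" and T :: "'a \<Rightarrow> 'a" and r :: nat and \<omega> :: "nat \<Rightarrow> 'a"
  assumes ergodic: "ergodic_system M T" and periodic: "periodic_with M r \<omega>"
begin

abbreviation atoms :: "'a set" where
  "atoms \<equiv> \<omega> ` {1..r}"

lemma measure_preserving: "measure_preserving_system M T"
  using ergodic by (rule ergodic_system_measure_preserving)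

sublocale prob_space M
  using measure_preserving by (rule measure_preserving_system_prob_space)

lemma T_measurable: "T \<in> M \<rightarrow>\<^sub>M M"
  using measure_preserving by (rule measure_preserving_system_measurable)

lemma r_pos: "0 < r"
  using periodic by (simp add: periodic_with_def)

lemma card_atoms: "card atoms = r"
  using periodic by (simp add: periodic_with_def card_image)

lemma measure_atom: "x \<in> atoms \<Longrightarrow> measure M {x} = 1 / r"
  using periodic by (auto simp: periodic_with_def)

lemma atom_sets: "x \<in> atoms \<Longrightarrow> {x} \<in> sets M"
  using measure_atom r_pos by (intro measure_pos_singleton_sets) simp

lemma subset_atoms_sets:
  assumes "A \<subseteq> atoms"
  shows "A \<in> sets M"
proof (rule sets.countable)
  show "{a} \<in> sets M" if "a \<in> A" for a
    using that assms by (intro atom_sets) blast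
  show "countable A"
    using assms by (meson countable_finite finite_atLeastAtMost finite_imageI finite_subset)
qed

lemma measure_subset_atoms:
  assumes "A \<subseteq> atoms"
  shows "measure M A = card A / r"
proof -
  have "finite A"
    using assms finite_subset by blast
  then have "measure M A = (\<Sum>x\<in>A. measure M {x})"
    using assms atom_sets by (intro finite_measure_eq_sum_singleton) auto
  also have "\<dots> = (\<Sum>x\<in>A. 1 / r)"
    using assms by (intro sum.cong) (auto simp: measure_atom)
  finally show ?thesis
    by simp
qed

lemma measure_atoms: "measure M atoms = 1"
  using measure_subset_atoms[of atoms] card_atoms r_pos by simp

lemma measure_eq_card_atoms:
  assumes E: "E \<in> sets M"
  shows "measure M E = card (E \<inter> atoms) / r"
proof -
  have atoms_sets: "atoms \<in> sets M"
    by (rule subset_atoms_sets) simp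
  have "measure M (E - atoms) \<le> measure M (space M - atoms)"
    using E atoms_sets sets.sets_into_space[OF E] by (intro finite_measure_mono) auto
  also have "\<dots> = 0"
    using prob_compl[OF atoms_sets] measure_atoms by simp
  finally have "measure M E = measure M (E \<inter> atoms)"
    using finite_measure_Diff'[OF E atoms_sets] measure_nonneg[of M "E - atoms"] by simp
  then show ?thesis
    by (simp add: measure_subset_atoms)
qed

lemma full_measure_imp_atoms_subset:
  assumes "E \<in> sets M" and "measure M E = 1"
  shows "atoms \<subseteq> E"
proof -
  have "card (E \<inter> atoms) = card atoms"
    using assms measure_eq_card_atoms[of E] card_atoms r_pos by (simp add: field_simps)
  then have "E \<inter> atoms = atoms"
    by (intro card_subset_eq) auto
  then show ?thesis
    by blast
qed

lemma T_atoms: "x \<in> atoms \<Longrightarrow> T x \<in> atoms"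
proof -
  have atoms_sets: "atoms \<in> sets M"
    by (rule subset_atoms_sets) simp
  then have "measure M (T -` atoms \<inter> space M) = 1"
    using measure_preserving measure_atoms unfolding measure_preserving_system_def by simp
  moreover have "T -` atoms \<inter> space M \<in> sets M"
    using T_measurable atoms_sets by (rule measurable_sets)
  ultimately have "atoms \<subseteq> T -` atoms \<inter> space M"
    using full_measure_imp_atoms_subset by blast
  then show "x \<in> atoms \<Longrightarrow> T x \<in> atoms"
    by blast
qed

lemma orbit_eq_atoms:
  assumes x: "x \<in> atoms"
  shows "orbit T x = atoms"
proof
  show orbit_subset: "orbit T x \<subseteq> atoms"
  proof
    fix y
    assume "y \<in> orbit T x"
    then show "y \<in> atoms"
      by induction (use x T_atoms in auto)
  qed
  then have orbit_sets: "orbit T x \<in> sets M"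
    by (rule subset_atoms_sets)
  have "measure M {T x} \<le> measure M (orbit T x)"
    using orbit_sets orbit.base[of T x] by (intro finite_measure_mono) auto
  moreover have "0 < measure M {T x}"
    using measure_atom[OF T_atoms[OF x]] r_pos by simp
  ultimately have "0 < measure M (orbit T x)"
    by linarith
  then have "measure M (orbit T x) = 1"
    using ergodic_system_forward_invariant_measure[OF ergodic orbit_sets orbit.step] by blast
  then show "atoms \<subseteq> orbit T x"
    using orbit_sets full_measure_imp_atoms_subset by blast
qed

lemma atoms_cycle:
  assumes x: "x \<in> atoms"
  shows "(T ^^ r) x = x" and "bij_betw (\<lambda>n. (T ^^ n) x) {..<r} atoms"
proof -
  have x_orbit: "x \<in> orbit T x"
    using x orbit_eq_atoms[OF x] by simp
  define p where "p = funpow_dist1 T x x"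
  have "(T ^^ p) x = x"
    unfolding p_def using x_orbit by (rule funpow_dist1_prop)
  have bij: "bij_betw (\<lambda>n. (T ^^ n) x) {..<p} atoms"
    unfolding bij_betw_def p_def
    using inj_on_funpow_dist1[OF x_orbit] orbit_conv_funpow_dist1[OF x_orbit] orbit_eq_atoms[OF x]
    by (simp add: atLeast0LessThan)
  then have "p = r"
    using bij_betw_same_card card_atoms by fastforce
  then show "(T ^^ r) x = x" "bij_betw (\<lambda>n. (T ^^ n) x) {..<r} atoms"
    using \<open>(T ^^ p) x = x\<close> bij by simp_all
qed

\<comment> \<open>Since T^r fixes every atom, T^((r-1) i) is a left inverse of T^i on the atoms.\<close>
lemma inj_on_funpow_atoms: "inj_on (T ^^ i) atoms"
proof (rule inj_on_inverseI)
  fix y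
  assume y: "y \<in> atoms"
  have "(r - 1) * i + i = r * i"
    using r_pos by (cases r) auto
  then have "(T ^^ ((r - 1) * i)) ((T ^^ i) y) = (T ^^ (r * i)) y"
    by (metis comp_apply funpow_add)
  also have "\<dots> = (T ^^ ((r * i) mod r)) y"
    by (rule funpow_mod_eq[OF atoms_cycle(1)[OF y], symmetric])
  also have "\<dots> = y"
    by simp
  finally show "(T ^^ ((r - 1) * i)) ((T ^^ i) y) = y" .
qed

lemma card_funpow_preimage_atom_le_1: "card {y \<in> A \<inter> atoms. (T ^^ i) y = x} \<le> 1"
proof -
  have "inj_on (T ^^ i) {y \<in> A \<inter> atoms. (T ^^ i) y = x}"
    using inj_on_funpow_atoms by (rule inj_on_subset) blast
  moreover have "(T ^^ i) ` {y \<in> A \<inter> atoms. (T ^^ i) y = x} \<subseteq> {x}"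
    by blast
  ultimately show ?thesis
    using card_inj_on_le[of "T ^^ i" _ "{x}"] by simp
qed

lemma sum_card_funpow_preimage_atom:
  assumes x: "x \<in> atoms"
  shows "(\<Sum>i<r. card {y \<in> A \<inter> atoms. (T ^^ i) y = x}) = card (A \<inter> atoms)"
proof -
  have "{y \<in> A \<inter> atoms. (T ^^ i) y = x} = (A \<inter> atoms) \<inter> {y. (T ^^ i) y = x}" for i
    by blast
  then have "(\<Sum>i<r. card {y \<in> A \<inter> atoms. (T ^^ i) y = x})
               = (\<Sum>i<r. \<Sum>y\<in>A \<inter> atoms. of_bool ((T ^^ i) y = x))"
    by simp
  also have "\<dots> = (\<Sum>y\<in>A \<inter> atoms. \<Sum>i<r. of_bool ((T ^^ i) y = x))"
    by (rule sum.swap)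
  also have "\<dots> = (\<Sum>y\<in>A \<inter> atoms. 1)"
  proof (rule sum.cong[OF refl])
    fix y
    assume "y \<in> A \<inter> atoms"
    then have bij: "bij_betw (\<lambda>n. (T ^^ n) y) {..<r} atoms"
      by (intro atoms_cycle(2)) blast
    then have "x \<in> (\<lambda>n. (T ^^ n) y) ` {..<r}"
      using x by (simp add: bij_betw_imp_surj_on)
    then obtain j where j: "j < r" "(T ^^ j) y = x"
      by auto
    then have "{..<r} \<inter> {i. (T ^^ i) y = x} = {j}"
      using bij by (auto simp: bij_betw_def inj_on_def)
    then show "(\<Sum>i<r. of_bool ((T ^^ i) y = x)) = (1::nat)"
      by simp
  qed
  finally show ?thesis
    by simp
qed

lemma measure_Int_vimage_atom:
  assumes B: "B \<in> sets M" and x: "x \<in> atoms"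
  shows "measure M (B \<inter> ((T ^^ i) -` {x} \<inter> space M)) = card {y \<in> B \<inter> atoms. (T ^^ i) y = x} / r"
proof -
  have "atoms \<subseteq> space M"
    using periodic by (auto simp: periodic_with_def)
  then have "B \<inter> ((T ^^ i) -` {x} \<inter> space M) \<inter> atoms = {y \<in> B \<inter> atoms. (T ^^ i) y = x}"
    by blast
  moreover have "B \<inter> ((T ^^ i) -` {x} \<inter> space M) \<in> sets M"
    using B vimage_funpow_sets[OF T_measurable atom_sets[OF x]] by (rule sets.Int)
  ultimately show ?thesis
    by (simp add: measure_eq_card_atoms)
qed

lemma Cesaro_sqrt_measure_vimage_atom:
  assumes B: "B \<in> sets M" and x: "x \<in> atoms"
  shows "(\<lambda>n. 1 / real n * (\<Sum>i<n. sqrt (measure M (B \<inter> ((T ^^ i) -` {x} \<inter> space M)))))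
           \<longlonglongrightarrow> sqrt (1 / r) * card (B \<inter> atoms) / r"
proof -
  define k where "k i = card {y \<in> B \<inter> atoms. (T ^^ i) y = x}" for i
  have sqrt_eq: "sqrt (measure M (B \<inter> ((T ^^ i) -` {x} \<inter> space M))) = k i * sqrt (1 / r)" for i
  proof -
    have "k i \<le> 1"
      unfolding k_def by (rule card_funpow_preimage_atom_le_1)
    moreover have "measure M (B \<inter> ((T ^^ i) -` {x} \<inter> space M)) = k i / r"
      unfolding k_def by (rule measure_Int_vimage_atom[OF B x])
    ultimately show ?thesis
      by (cases "k i") (auto simp: real_sqrt_divide)
  qed
  have k_mod: "k i = k (i mod r)" for i
  proof -
    have "(T ^^ (i mod r)) y = (T ^^ i) y" if "y \<in> atoms" for y
      using funpow_mod_eq[OF atoms_cycle(1)[OF that]] .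
    then have "{y \<in> B \<inter> atoms. (T ^^ i) y = x} = {y \<in> B \<inter> atoms. (T ^^ (i mod r)) y = x}"
      by auto
    then show ?thesis
      by (simp add: k_def)
  qed
  have "(\<Sum>i<r. k i) = card (B \<inter> atoms)"
    unfolding k_def by (rule sum_card_funpow_preimage_atom[OF x])
  then have "(\<Sum>i<r. real (k i)) = card (B \<inter> atoms)"
    by (metis of_nat_sum)
  then have "(\<Sum>i<r. k i * sqrt (1 / r)) = sqrt (1 / r) * card (B \<inter> atoms)"
    by (simp add: sum_distrib_right[symmetric])
  moreover have "(\<lambda>n. 1 / real n * (\<Sum>i<n. k i * sqrt (1 / r))) \<longlonglongrightarrow> (\<Sum>i<r. k i * sqrt (1 / r)) / r"
    by (rule Cesaro_mean_periodic[OF r_pos]) (use k_mod in metis)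
  ultimately show ?thesis
    unfolding sqrt_eq by simp
qed

lemma cond_i_atom:
  assumes x: "x \<in> atoms"
  shows "cond_i M T {x}"
  unfolding cond_i_def
proof (intro conjI ballI impI)
  show "{x} \<in> sets M"
    by (rule atom_sets[OF x])
  show "0 < measure M {x}"
    using measure_atom[OF x] r_pos by simp
  fix C
  assume C: "C \<in> sets M" "C \<subseteq> {x}"
  show "(\<lambda>n. 1 / real n * (\<Sum>i<n. sqrt (measure M ({x} \<inter> ((T ^^ i) -` C \<inter> space M)))))
          \<longlonglongrightarrow> sqrt (measure M {x}) * measure M C"
  proof (cases "C = {}")
    case False
    then have "C = {x}"
      using C(2) by blast
    moreover have "card ({x} \<inter> atoms) = 1"
      using x by simp
    ultimately show ?thesis
      using Cesaro_sqrt_measure_vimage_atom[OF atom_sets[OF x] x] measure_atom[OF x] by simp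
  qed simp
qed

lemma ex_cond_i: "\<exists>B. cond_i M T B"
proof -
  have "\<omega> 1 \<in> atoms"
    using r_pos by simp
  then show ?thesis
    using cond_i_atom by blast
qed

lemma cond_i_measure:
  assumes B: "cond_i M T B"
  shows "measure M B = 1 / r"
proof -
  have B_sets: "B \<in> sets M" and "0 < measure M B"
    using B by (auto simp: cond_i_def)
  define k where "k = card (B \<inter> atoms)"
  have measure_B: "measure M B = k / r"
    unfolding k_def by (rule measure_eq_card_atoms[OF B_sets])
  then have "0 < k"
    using \<open>0 < measure M B\<close> r_pos by (simp add: zero_less_divide_iff)
  then obtain x where x: "x \<in> B" "x \<in> atoms"
    unfolding k_def by (auto simp: card_gt_0_iff)
  have "(\<lambda>n. 1 / real n * (\<Sum>i<n. sqrt (measure M (B \<inter> ((T ^^ i) -` {x} \<inter> space M)))))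
          \<longlonglongrightarrow> sqrt (measure M B) * measure M {x}"
    using B atom_sets[OF x(2)] x(1) unfolding cond_i_def by blast
  moreover have "(\<lambda>n. 1 / real n * (\<Sum>i<n. sqrt (measure M (B \<inter> ((T ^^ i) -` {x} \<inter> space M)))))
          \<longlonglongrightarrow> sqrt (1 / r) * k / r"
    unfolding k_def by (rule Cesaro_sqrt_measure_vimage_atom[OF B_sets x(2)])
  ultimately have "sqrt (measure M B) * measure M {x} = sqrt (1 / r) * k / r"
    by (rule LIMSEQ_unique)
  then have "sqrt k = k"
    using measure_B measure_atom[OF x(2)] r_pos by (simp add: real_sqrt_divide field_simps)
  then have "real k * (real k - 1) = 0"
    by (metis of_nat_0_le_iff real_sqrt_pow2 power2_eq_square right_diff_distrib mult.right_neutral diff_self)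
  then have "k = 1"
    using \<open>0 < k\<close> by simp
  then show ?thesis
    using measure_B by simp
qed

end

lemma cond_i_imp_periodic:
  assumes erg: "ergodic_system M T" and "standard_space M" and B: "cond_i M T B"
  shows "\<exists>r \<omega>. periodic_with M r \<omega>"
proof -
  have mps: "measure_preserving_system M T"
    using erg by (rule ergodic_system_measure_preserving)
  interpret prob_space M
    using mps by (rule measure_preserving_system_prob_space)
  obtain U :: "nat \<Rightarrow> 'a set" where U: "\<And>k. U k \<in> sets M"
    and sep: "\<And>x y. x \<in> space M \<Longrightarrow> y \<in> space M \<Longrightarrow> x \<noteq> y \<Longrightarrow> \<exists>k. x \<in> U k \<and> y \<notin> U k"
    using standard_space_separating_sequence[OF \<open>standard_space M\<close>] by blast
  have "B \<in> sets M" and "0 < measure M B"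
    using B by (auto simp: cond_i_def)
  then have "\<exists>x\<in>B. measure M B ^ 3 \<le> measure M {x}"
    by (intro separating_sequence_point_mass[OF U sep])
      (use cond_i_partition_has_large_piece[OF mps B] in auto)
  then obtain x where "0 < measure M {x}"
    using \<open>0 < measure M B\<close> by (meson less_le_trans zero_less_power)
  then show ?thesis
    using ergodic_system_point_mass_imp_periodic[OF erg] singleton_in_sets_separating[OF U sep]
    by blast
qed

theorem proposition6p4:
  fixes M :: "'a measure" and T :: "'a \<Rightarrow> 'a"
  assumes "ergodic_system M T" and "standard_space M"
  shows "((\<exists>B. cond_i M T B) \<longleftrightarrow> (\<exists>r \<omega>. periodic_with M r \<omega>)) \<and>
         (\<forall>B r \<omega>. cond_i M T B \<longrightarrow> periodic_with M r \<omega> \<longrightarrow> real r = 1 / measure M B)"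
proof -
  have "\<exists>r \<omega>. periodic_with M r \<omega>" if "cond_i M T B" for B
    using assms that by (rule cond_i_imp_periodic)
  moreover have "\<exists>B. cond_i M T B" if "periodic_with M r \<omega>" for r \<omega>
  proof -
    interpret periodic_ergodic_system M T r \<omega>
      using assms(1) that by unfold_locales
    show ?thesis
      by (rule ex_cond_i)
  qed
  moreover have "real r = 1 / measure M B" if "cond_i M T B" and "periodic_with M r \<omega>" for B r \<omega>
  proof -
    interpret periodic_ergodic_system M T r \<omega>
      using assms(1) that(2) by unfold_locales
    show ?thesis
      using cond_i_measure[OF that(1)] r_pos by simp
  qed
  ultimately show ?thesis
    by blast
qed

end
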